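(* Let $\varepsilon\in(0,\tfrac12)$, $n\ge 0$, and let $W_n$ be the weighted diamond defined below. Then any shortest (weighted) path between two vertices of $W_n$ contains at most one edge of weight $1$, and for each $j\in\{1,\dots,n\}$ at most two edges of weight $(\tfrac12+\varepsilon)^j$.
   Context: Diamonds: $D_0$ is an edge; $D_i$ is obtained from $D_{i-1}$ by replacing each edge $uv$ by a quadrilateral $u,a,v,b$. Weighted diamonds: $W_0=D_0$ with its edge of weight $1$; for $n\ge1$, $W_n$ has vertex set $V(D_n)$ and edge set $E(W_{n-1})\cup E(D_n)$, where edges of $W_{n-1}$ keep their weights and each edge of $D_n$ gets weight $(\tfrac12+\varepsilon)^n$. The length of a path is the sum of the weights of its edges; a shortest path is one of minimal length between its endpoints. *)

theory Defs
  imports Complex_Main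
begin

text \<open>Vertices of the diamonds: the two original endpoints, and the vertices
  a (flag True) and b (flag False) created when an edge (u,v) is replaced by
  the quadrilateral u,a,v,b.\<close>
datatype dv = Src | Tgt | Mid dv dv bool

text \<open>Edge set of D_n (edges stored as ordered pairs, graph is undirected).\<close>
fun dE :: "nat \<Rightarrow> (dv \<times> dv) set" where
  "dE 0 = {(Src, Tgt)}"
| "dE (Suc n) = (\<Union>(u, v)\<in>dE n.
     {(u, Mid u v True), (Mid u v True, v), (u, Mid u v False), (Mid u v False, v)})"

definition dV :: "nat \<Rightarrow> dv set" where
  "dV n = fst ` dE n \<union> snd ` dE n"

text \<open>An edge of W_n, tagged with the level j such that it is an edge of D_j;
  its weight is (1/2+eps)^j. Steps (u,v,j) traverse such an edge from u to v.\<close>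
definition wedge :: "nat \<Rightarrow> dv \<times> dv \<times> nat \<Rightarrow> bool" where
  "wedge n e = (case e of (u, v, j) \<Rightarrow> j \<le> n \<and> ((u, v) \<in> dE j \<or> (v, u) \<in> dE j))"

fun wwalk :: "nat \<Rightarrow> dv \<Rightarrow> dv \<Rightarrow> (dv \<times> dv \<times> nat) list \<Rightarrow> bool" where
  "wwalk n x y [] = (x = y)"
| "wwalk n x y ((u, v, j) # ps) = (u = x \<and> wedge n (u, v, j) \<and> wwalk n v y ps)"

definition wpath :: "nat \<Rightarrow> dv \<Rightarrow> dv \<Rightarrow> (dv \<times> dv \<times> nat) list \<Rightarrow> bool" where
  "wpath n x y ps = (x \<in> dV n \<and> wwalk n x y ps \<and> distinct (x # map (\<lambda>e. fst (snd e)) ps))"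

definition plen :: "real \<Rightarrow> (dv \<times> dv \<times> nat) list \<Rightarrow> real" where
  "plen eps ps = sum_list (map (\<lambda>e. (1/2 + eps) ^ snd (snd e)) ps)"

definition shortest_path :: "real \<Rightarrow> nat \<Rightarrow> dv \<Rightarrow> dv \<Rightarrow> (dv \<times> dv \<times> nat) list \<Rightarrow> bool" where
  "shortest_path eps n x y ps =
     (wpath n x y ps \<and> (\<forall>qs. wpath n x y qs \<longrightarrow> plen eps ps \<le> plen eps qs))"

definition nlev :: "nat \<Rightarrow> (dv \<times> dv \<times> nat) list \<Rightarrow> nat" where
  "nlev j ps = length (filter (\<lambda>e. snd (snd e) = j) ps)"

end

theory Submission imports Defs begin

text \<open>Write \<open>q = 1/2 + \<epsilon>\<close>. A vertex created at level \<open>n+1\<close> (a deep vertex of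
  \<open>W (n+1)\<close>) is adjacent only to the two endpoints \<open>u, v\<close> of the edge of \<open>D n\<close> it
  subdivides, through two edges of weight \<open>q^(n+1)\<close>, and every edge of weight \<open>q^(n+1)\<close>
  has a deep endpoint. Since \<open>2 q^(n+1) > q^n\<close>, the edge \<open>uv\<close> of \<open>W n\<close> is a shortcut,
  so a shortest path never passes through a deep vertex; hence its edges of weight
  \<open>q^(n+1)\<close> can only be its first and its last one. What lies between them is a path of
  \<open>W n\<close>, and a shortest one, because a path of \<open>W n\<close> cannot revisit the deep endpoints.
  Induction on \<open>n\<close> finishes the proof; in \<open>W 0\<close> a path has at most one edge.\<close>

abbreviation level :: "dv \<times> dv \<times> nat \<Rightarrow> nat" where
  "level e \<equiv> snd (snd e)"

abbreviation walk_verts :: "dv \<Rightarrow> (dv \<times> dv \<times> nat) list \<Rightarrow> dv list" where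
  "walk_verts x ps \<equiv> x # map (\<lambda>e. fst (snd e)) ps"

text \<open>For vertices of the diamonds, \<open>depth v\<close> is the least \<open>n\<close> with \<open>v \<in> dV n\<close>.\<close>

fun depth :: "dv \<Rightarrow> nat" where
  "depth Src = 0"
| "depth Tgt = 0"
| "depth (Mid u v f) = Suc (max (depth u) (depth v))"

lemma mem_dE_Suc_iff:
  "(p, q) \<in> dE (Suc n) \<longleftrightarrow>
     (\<exists>u v f. (u, v) \<in> dE n \<and> ((p, q) = (u, Mid u v f) \<or> (p, q) = (Mid u v f, v)))"
proof
  assume "\<exists>u v f. (u, v) \<in> dE n \<and> ((p, q) = (u, Mid u v f) \<or> (p, q) = (Mid u v f, v))"
  then obtain u v f where "(u, v) \<in> dE n" "(p, q) = (u, Mid u v f) \<or> (p, q) = (Mid u v f, v)"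
    by blast
  then show "(p, q) \<in> dE (Suc n)" by (cases f) force+
qed auto

lemma dE_depth_le: "(p, q) \<in> dE j \<Longrightarrow> depth p \<le> j \<and> depth q \<le> j"
proof (induction j arbitrary: p q)
  case (Suc j)
  then obtain u v f where "(u, v) \<in> dE j" "(p, q) = (u, Mid u v f) \<or> (p, q) = (Mid u v f, v)"
    using mem_dE_Suc_iff by blast
  with Suc.IH[of u v] show ?case by auto
qed auto

lemma dE_le_max_depth: "(u, v) \<in> dE n \<Longrightarrow> n \<le> max (depth u) (depth v)"
proof (induction n arbitrary: u v)
  case (Suc n)
  then obtain a b f where "(a, b) \<in> dE n" "(u, v) = (a, Mid a b f) \<or> (u, v) = (Mid a b f, b)"
    using mem_dE_Suc_iff by blast
  with Suc.IH[of a b] show ?case by auto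
qed auto

lemma dV_0: "dV 0 = {Src, Tgt}"
  unfolding dV_def by auto

lemma depth_le_if_dV: "v \<in> dV n \<Longrightarrow> depth v \<le> n"
  unfolding dV_def using dE_depth_le by force

lemma dV_Suc_mono: "dV n \<subseteq> dV (Suc n)"
proof
  fix p assume "p \<in> dV n"
  then obtain q where "(p, q) \<in> dE n \<or> (q, p) \<in> dE n" unfolding dV_def by force
  then have "(p, Mid p q True) \<in> dE (Suc n) \<or> (Mid q p True, p) \<in> dE (Suc n)"
    using mem_dE_Suc_iff by blast
  then show "p \<in> dV (Suc n)" unfolding dV_def by force
qed

lemma dV_mono: "j \<le> n \<Longrightarrow> dV j \<subseteq> dV n"
  using lift_Suc_mono_le[of dV, OF dV_Suc_mono] by blast

lemma dE_dV: "(u, v) \<in> dE j \<Longrightarrow> u \<in> dV j \<and> v \<in> dV j"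
  unfolding dV_def by force

lemma wedge_dV: "wedge n (u, v, j) \<Longrightarrow> u \<in> dV n \<and> v \<in> dV n"
  unfolding wedge_def using dE_dV dV_mono[of j n] by blast

lemma wedge_commute: "wedge n (u, v, j) = wedge n (v, u, j)"
  unfolding wedge_def by auto

lemma wedge_Suc_depth_gt:
  assumes "wedge (Suc n) (a, b, Suc n)"
  shows "n < depth a \<or> n < depth b"
proof -
  from assms have "(a, b) \<in> dE (Suc n) \<or> (b, a) \<in> dE (Suc n)" by (auto simp: wedge_def)
  then obtain u v f where uv: "(u, v) \<in> dE n" and "a = Mid u v f \<or> b = Mid u v f"
    using mem_dE_Suc_iff by blast
  moreover from dE_le_max_depth[OF uv] have "n < depth (Mid u v f)" by simp
  ultimately show ?thesis by auto
qed

lemma wedge_Suc_level_deep_end: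
  assumes "wedge (Suc n) (a, b, Suc n)"
  shows "a \<in> dV n \<Longrightarrow> n < depth b" and "b \<in> dV n \<Longrightarrow> n < depth a"
  using wedge_Suc_depth_gt[OF assms] depth_le_if_dV by (auto simp: not_less[symmetric])

lemma wedge_at_deep_vertex:
  assumes "wedge (Suc n) (a, w, j)" and "n < depth w"
  shows "j = Suc n \<and> (\<exists>u v f. (u, v) \<in> dE n \<and> w = Mid u v f \<and> (a = u \<or> a = v))"
proof -
  from assms(1) have j: "j \<le> Suc n" and e: "(a, w) \<in> dE j \<or> (w, a) \<in> dE j"
    by (auto simp: wedge_def)
  from e have "depth w \<le> j" using dE_depth_le by blast
  with j assms(2) have j_eq: "j = Suc n" by linarith
  from e j_eq obtain u v f where uv: "(u, v) \<in> dE n" and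
    "(a, w) = (u, Mid u v f) \<or> (a, w) = (Mid u v f, v) \<or>
     (w, a) = (u, Mid u v f) \<or> (w, a) = (Mid u v f, v)"
    using mem_dE_Suc_iff by blast
  with dE_depth_le[OF uv] assms(2) have "w = Mid u v f \<and> (a = u \<or> a = v)" by auto
  with uv j_eq show ?thesis by blast
qed

lemma wwalk_append_iff: "wwalk n x y (as @ bs) \<longleftrightarrow> (\<exists>z. wwalk n x z as \<and> wwalk n z y bs)"
  by (induction n x y as rule: wwalk.induct) auto

lemma wwalk_last: "wwalk n x z as \<Longrightarrow> z = last (walk_verts x as)"
  by (induction n x z as rule: wwalk.induct) auto

lemma walk_verts_append:
  "wwalk n x z as \<Longrightarrow> walk_verts x (as @ bs) = butlast (walk_verts x as) @ walk_verts z bs"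
  by (induction n x z as rule: wwalk.induct) auto

lemma wwalk_verts_dV: "wwalk n x y ps \<Longrightarrow> ps \<noteq> [] \<Longrightarrow> set (walk_verts x ps) \<subseteq> dV n"
  by (induction n x y ps rule: wwalk.induct) (fastforce dest: wedge_dV)+

lemma wwalk_ends_dV: "wwalk n x y ps \<Longrightarrow> ps \<noteq> [] \<Longrightarrow> x \<in> dV n \<and> y \<in> dV n"
  using wwalk_verts_dV wwalk_last by (metis last_in_set list.distinct(1) list.set_intros(1) subsetD)

lemma wwalk_level_le: "wwalk n x y ps \<Longrightarrow> e \<in> set ps \<Longrightarrow> level e \<le> n"
  by (induction n x y ps rule: wwalk.induct) (auto simp: wedge_def)

lemma wwalk_mono: "wwalk n x y ps \<Longrightarrow> n \<le> m \<Longrightarrow> wwalk m x y ps"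
  by (induction n x y ps rule: wwalk.induct) (auto simp: wedge_def)

lemma wwalk_top_level_le_1:
  assumes "wwalk (Suc n) x y ps" "length ps \<le> 1" "\<forall>e\<in>set ps. level e = Suc n"
  shows "ps = [] \<and> x = y \<or> ps = [(x, y, Suc n)] \<and> wedge (Suc n) (x, y, Suc n)"
proof (cases ps)
  case (Cons p rest)
  with assms show ?thesis by (cases p) (auto simp: le_Suc_eq)
qed (use assms in simp)

lemma wwalk_restrict: "wwalk m x y ps \<Longrightarrow> \<forall>e\<in>set ps. level e \<le> n \<Longrightarrow> wwalk n x y ps"
  by (induction m x y ps rule: wwalk.induct) (auto simp: wedge_def)

lemma plen_append: "plen eps (as @ bs) = plen eps as + plen eps bs"
  unfolding plen_def by simp

lemma plen_Cons: "plen eps (e # bs) = (1/2 + eps) ^ level e + plen eps bs"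
  unfolding plen_def by simp

lemma nlev_append: "nlev j (as @ bs) = nlev j as + nlev j bs"
  unfolding nlev_def by simp

lemma weight_lt_double_next: "0 < eps \<Longrightarrow> (1/2 + eps) ^ n < 2 * (1/2 + eps :: real) ^ Suc n"
  by (simp add: algebra_simps)

lemma shortest_path_subpath_le:
  assumes sp: "shortest_path eps m x y (pre @ mid @ post)"
    and pre: "wwalk m x x' pre" and post: "wwalk m y' y post"
    and qs: "wpath m x' y' qs"
    and disj: "set (walk_verts x' qs) \<inter> set (butlast (walk_verts x pre)) = {}"
      "set (walk_verts x' qs) \<inter> set (map (\<lambda>e. fst (snd e)) post) = {}"
  shows "plen eps mid \<le> plen eps qs"
proof -
  from sp have x: "x \<in> dV m" and dist: "distinct (walk_verts x (pre @ mid @ post))"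
    and min: "\<And>rs. wpath m x y rs \<Longrightarrow> plen eps (pre @ mid @ post) \<le> plen eps rs"
    unfolding shortest_path_def wpath_def by auto
  from qs have qs_walk: "wwalk m x' y' qs" and qs_dist: "distinct (walk_verts x' qs)"
    unfolding wpath_def by auto
  define A where "A = butlast (walk_verts x pre)"
  define C where "C = map (\<lambda>e. fst (snd e)) post"
  have "distinct (A @ walk_verts x' mid @ C)"
    using dist unfolding A_def C_def walk_verts_append[OF pre] by simp
  with qs_dist disj[folded A_def C_def] have "distinct (A @ walk_verts x' qs @ C)"
    by auto
  then have "distinct (walk_verts x (pre @ qs @ post))"
    unfolding A_def C_def walk_verts_append[OF pre] by simp
  moreover have "wwalk m x y (pre @ qs @ post)"
    using pre qs_walk post by (auto simp: wwalk_append_iff)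
  ultimately have "plen eps (pre @ mid @ post) \<le> plen eps (pre @ qs @ post)"
    using x min unfolding wpath_def by blast
  then show ?thesis by (simp add: plen_append)
qed

lemma shortest_path_no_interior_deep_vertex:
  assumes eps: "0 < eps" and sp: "shortest_path eps (Suc n) x y ps"
    and ps: "ps = as @ (a, w, j) # (w, b, k) # bs" and deep: "n < depth w"
  shows False
proof -
  from sp have x: "x \<in> dV (Suc n)" and walk: "wwalk (Suc n) x y ps"
    and dist: "distinct (walk_verts x ps)"
    and min: "\<And>qs. wpath (Suc n) x y qs \<Longrightarrow> plen eps ps \<le> plen eps qs"
    unfolding shortest_path_def wpath_def by auto
  from walk obtain z where as: "wwalk (Suc n) x z as" and "z = a"
    and e1: "wedge (Suc n) (a, w, j)" and e2: "wedge (Suc n) (b, w, k)"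
    and bs: "wwalk (Suc n) b y bs"
    unfolding ps by (auto simp: wwalk_append_iff wedge_commute)
  obtain u v f where j: "j = Suc n" and uv: "(u, v) \<in> dE n" and w: "w = Mid u v f"
    and a: "a = u \<or> a = v"
    using wedge_at_deep_vertex[OF e1 deep] by blast
  from wedge_at_deep_vertex[OF e2 deep] w have k: "k = Suc n" and b: "b = u \<or> b = v"
    by auto
  define A where "A = butlast (walk_verts x as)"
  define C where "C = map (\<lambda>e. fst (snd e)) bs"
  have "distinct (A @ a # w # b # C)"
    using dist unfolding ps A_def C_def walk_verts_append[OF as] \<open>z = a\<close> by simp
  then have "a \<noteq> b" and dist_qs: "distinct (A @ a # b # C)" by auto
  with a b uv have shortcut: "wedge (Suc n) (a, b, n)" unfolding wedge_def by auto
  let ?qs = "as @ (a, b, n) # bs"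
  have "distinct (walk_verts x ?qs)"
    using dist_qs unfolding A_def C_def walk_verts_append[OF as] \<open>z = a\<close> by simp
  moreover have "wwalk (Suc n) x y ?qs"
    using as \<open>z = a\<close> shortcut bs by (auto simp: wwalk_append_iff)
  ultimately have "plen eps ps \<le> plen eps ?qs"
    using x min unfolding wpath_def by blast
  then have "2 * (1/2 + eps) ^ Suc n \<le> (1/2 + eps) ^ n"
    using ps j k by (simp add: plen_append plen_Cons)
  with weight_lt_double_next[OF eps, of n] show False by linarith
qed

lemma shortest_path_top_level_at_ends:
  assumes eps: "0 < eps" and sp: "shortest_path eps (Suc n) x y ps"
    and ps: "ps = as @ (a, b, Suc n) # bs"
  shows "as = [] \<or> bs = []"
proof (rule ccontr)
  assume "\<not> (as = [] \<or> bs = [])"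
  then obtain as' c1 c2 c3 bs' d1 d2 d3 where
    as: "as = as' @ [(c1, c2, c3)]" and bs: "bs = (d1, d2, d3) # bs'"
    by (metis list.exhaust rev_exhaust prod_cases3)
  from sp have "wwalk (Suc n) x y ps" unfolding shortest_path_def wpath_def by auto
  then have "wedge (Suc n) (a, b, Suc n)" and "c2 = a" and "d1 = b"
    unfolding ps as bs by (auto simp: wwalk_append_iff)
  then have "n < depth a \<or> n < depth b" using wedge_Suc_depth_gt by blast
  moreover have "ps = as' @ (c1, a, c3) # (a, b, Suc n) # bs"
    "ps = as @ (a, b, Suc n) # (b, d2, d3) # bs'"
    using ps as bs \<open>c2 = a\<close> \<open>d1 = b\<close> by auto
  ultimately show False
    using shortest_path_no_interior_deep_vertex[OF eps sp] by blast
qed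

lemma split_list_ends:
  assumes "\<And>as s bs. ps = as @ s # bs \<Longrightarrow> P s \<Longrightarrow> as = [] \<or> bs = []"
  obtains pre mid post where "ps = pre @ mid @ post" "length pre \<le> 1" "length post \<le> 1"
    "\<forall>e\<in>set pre. P e" "\<forall>e\<in>set post. P e" "\<forall>e\<in>set mid. \<not> P e"
proof (cases ps rule: rev_cases)
  case Nil
  show ?thesis by (rule that[of "[]" "[]" "[]"]) (use Nil in auto)
next
  case (snoc ps' l)
  show ?thesis
  proof (cases ps')
    case Nil
    show ?thesis
      by (rule that[of "[]" "filter (\<lambda>x. \<not> P x) [l]" "filter P [l]"]) (use snoc Nil in auto)
  next
    case (Cons e rest)
    have mid: "\<not> P s" if "s \<in> set rest" for s
    proof
      assume "P s"
      moreover from that obtain r1 r2 where "rest = r1 @ s # r2" by (meson split_list)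
      ultimately show False using assms[of "e # r1" s "r2 @ [l]"] snoc Cons by simp
    qed
    show ?thesis
      by (rule that[of "filter P [e]" "filter (\<lambda>x. \<not> P x) [e] @ rest @ filter (\<lambda>x. \<not> P x) [l]"
          "filter P [l]"]) (use snoc Cons mid in auto)
  qed
qed

lemma shortest_path_Suc_decompose:
  assumes eps: "0 < eps" and sp: "shortest_path eps (Suc n) x y ps"
  obtains pre mid post where "ps = pre @ mid @ post" "length pre \<le> 1" "length post \<le> 1"
    "\<forall>e\<in>set (pre @ post). level e = Suc n" "\<forall>e\<in>set mid. level e \<noteq> Suc n"
    "mid = [] \<or> (\<exists>x' y'. shortest_path eps n x' y' mid)"
proof -
  obtain pre mid post where ps: "ps = pre @ mid @ post" and len: "length pre \<le> 1" "length post \<le> 1"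
    and top: "\<forall>e\<in>set pre. level e = Suc n" "\<forall>e\<in>set post. level e = Suc n"
    and low: "\<forall>e\<in>set mid. level e \<noteq> Suc n"
  proof (rule split_list_ends)
    fix as s bs assume "ps = as @ s # bs" "level s = Suc n"
    then show "as = [] \<or> bs = []"
      using shortest_path_top_level_at_ends[OF eps sp] by (metis prod.collapse)
  qed
  from sp have walk: "wwalk (Suc n) x y ps" and dist: "distinct (walk_verts x ps)"
    unfolding shortest_path_def wpath_def by auto
  then obtain x' y' where pre: "wwalk (Suc n) x x' pre" and mid_Suc: "wwalk (Suc n) x' y' mid"
    and post: "wwalk (Suc n) y' y post"
    unfolding ps wwalk_append_iff by blast
  have "\<forall>e\<in>set mid. level e \<le> n"
    using wwalk_level_le[OF mid_Suc] low by (metis le_SucE)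
  then have mid: "wwalk n x' y' mid" using wwalk_restrict[OF mid_Suc] by blast
  have mid_shortest: "shortest_path eps n x' y' mid" if "mid \<noteq> []"
  proof -
    have ends: "x' \<in> dV n" "y' \<in> dV n" using wwalk_ends_dV[OF mid that] by auto
    have pre_deep: "\<forall>v\<in>set (butlast (walk_verts x pre)). n < depth v"
      using wwalk_top_level_le_1[OF pre len(1) top(1)] wedge_Suc_level_deep_end(2) ends(1)
      by auto
    have post_deep: "\<forall>v\<in>set (map (\<lambda>e. fst (snd e)) post). n < depth v"
      using wwalk_top_level_le_1[OF post len(2) top(2)] wedge_Suc_level_deep_end(1) ends(2)
      by auto
    have "distinct (walk_verts x' (mid @ post))"
      using dist unfolding ps walk_verts_append[OF pre] distinct_append by blast
    then have "distinct (walk_verts x' mid)" by simp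
    then have "wpath n x' y' mid" unfolding wpath_def using ends mid by simp
    moreover have "plen eps mid \<le> plen eps qs" if qs: "wpath n x' y' qs" for qs
    proof (rule shortest_path_subpath_le[OF sp[unfolded ps] pre post])
      from qs have walk_qs: "wwalk n x' y' qs" and "distinct (walk_verts x' qs)"
        unfolding wpath_def by auto
      then show "wpath (Suc n) x' y' qs"
        unfolding wpath_def using wwalk_mono[OF walk_qs, of "Suc n"] ends(1) dV_Suc_mono by auto
      have "set (walk_verts x' qs) \<subseteq> dV n"
        using wwalk_verts_dV[OF walk_qs] ends(1) by (cases qs) auto
      then have "\<forall>v\<in>set (walk_verts x' qs). depth v \<le> n"
        using depth_le_if_dV by blast
      then show "set (walk_verts x' qs) \<inter> set (butlast (walk_verts x pre)) = {}"
        "set (walk_verts x' qs) \<inter> set (map (\<lambda>e. fst (snd e)) post) = {}"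
        using pre_deep post_deep by (fastforce simp: not_less[symmetric])+
    qed
    ultimately show ?thesis unfolding shortest_path_def by blast
  qed
  have "mid = [] \<or> (\<exists>x' y'. shortest_path eps n x' y' mid)"
    using mid_shortest by blast
  with top low show ?thesis by (intro that[OF ps len]) auto
qed

lemma shortest_path_D0_length: "shortest_path eps 0 x y ps \<Longrightarrow> length ps \<le> 1"
proof -
  assume "shortest_path eps 0 x y ps"
  then have x: "x \<in> dV 0" and walk: "wwalk 0 x y ps" and dist: "distinct (walk_verts x ps)"
    unfolding shortest_path_def wpath_def by auto
  have "set (walk_verts x ps) \<subseteq> dV 0"
    using x wwalk_verts_dV[OF walk] by (cases ps) auto
  then have "card (set (walk_verts x ps)) \<le> card {Src, Tgt}"
    unfolding dV_0 by (rule card_mono[rotated]) simp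
  then show "length ps \<le> 1"
    using distinct_card[OF dist] by simp
qed

lemma nlev_bounds_Suc:
  assumes len: "length pre \<le> 1" "length post \<le> 1"
    and top: "\<forall>e\<in>set (pre @ post). level e = Suc n" and low: "\<forall>e\<in>set mid. level e \<noteq> Suc n"
    and mid: "nlev 0 mid \<le> 1 \<and> (\<forall>j\<in>{1..n}. nlev j mid \<le> 2)"
  shows "nlev 0 (pre @ mid @ post) \<le> 1 \<and> (\<forall>j\<in>{1..Suc n}. nlev j (pre @ mid @ post) \<le> 2)"
proof -
  have outer_low: "nlev j pre + nlev j post = 0" if "j \<noteq> Suc n" for j
    using top that unfolding nlev_def by (auto simp: filter_empty_conv)
  have outer_top: "nlev j pre \<le> 1" "nlev j post \<le> 1" for j
    using len unfolding nlev_def by (meson le_trans length_filter_le)+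
  have mid_top: "nlev (Suc n) mid = 0"
    using low unfolding nlev_def by (auto simp: filter_empty_conv)
  show ?thesis
  proof (intro conjI ballI)
    show "nlev 0 (pre @ mid @ post) \<le> 1"
      using outer_low[of 0] mid unfolding nlev_append by simp
  next
    fix j assume j: "j \<in> {1..Suc n}"
    show "nlev j (pre @ mid @ post) \<le> 2"
    proof (cases "j = Suc n")
      case True
      then show ?thesis using outer_top[of j] mid_top unfolding nlev_append by simp
    next
      case False
      with j mid have "nlev j mid \<le> 2" by auto
      with outer_low[OF False] show ?thesis unfolding nlev_append by simp
    qed
  qed
qed

theorem claimC:
  fixes eps :: real and n :: nat and x y :: dv and ps :: "(dv \<times> dv \<times> nat) list"
  assumes "0 < eps" and "eps < 1/2"
    and "shortest_path eps n x y ps"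
  shows "nlev 0 ps \<le> 1 \<and> (\<forall>j\<in>{1..n}. nlev j ps \<le> 2)"
  using assms(3)
proof (induction n arbitrary: x y ps)
  case 0
  have "nlev 0 ps \<le> length ps" unfolding nlev_def by (rule length_filter_le)
  with shortest_path_D0_length[OF "0"] show ?case by simp
next
  case (Suc n)
  obtain pre mid post where ps: "ps = pre @ mid @ post" and len: "length pre \<le> 1" "length post \<le> 1"
    and top: "\<forall>e\<in>set (pre @ post). level e = Suc n" and low: "\<forall>e\<in>set mid. level e \<noteq> Suc n"
    and mid: "mid = [] \<or> (\<exists>x' y'. shortest_path eps n x' y' mid)"
    by (rule shortest_path_Suc_decompose[OF assms(1) Suc.prems])
  from mid Suc.IH have "nlev 0 mid \<le> 1 \<and> (\<forall>j\<in>{1..n}. nlev j mid \<le> 2)"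
    by (auto simp: nlev_def)
  with len top low show ?case unfolding ps by (rule nlev_bounds_Suc)
qed

end
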